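(* Let $\Gamma$ be a finite connected regular graph with valency $k\ge 2$ and diameter $D\ge 3$. Then $\Gamma$ has an eigenvalue $\theta\neq k$ (of its adjacency matrix) satisfying $|\theta|>\sqrt{k/2}$.
   Context: Graphs are finite, undirected and simple; the eigenvalues of a graph are those of its adjacency matrix. *)

theory Defs
  imports Complex_Main "Jordan_Normal_Form.Char_Poly"
begin

definition simple_graph :: "nat \<Rightarrow> (nat \<Rightarrow> nat \<Rightarrow> bool) \<Rightarrow> bool" where
  "simple_graph n E \<longleftrightarrow>
     (\<forall>i j. E i j \<longrightarrow> i < n \<and> j < n \<and> i \<noteq> j \<and> E j i)"

definition neighbours :: "nat \<Rightarrow> (nat \<Rightarrow> nat \<Rightarrow> bool) \<Rightarrow> nat \<Rightarrow> nat set" where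
  "neighbours n E i = {j. j < n \<and> E i j}"

definition regular_graph :: "nat \<Rightarrow> (nat \<Rightarrow> nat \<Rightarrow> bool) \<Rightarrow> nat \<Rightarrow> bool" where
  "regular_graph n E k \<longleftrightarrow> (\<forall>i<n. card (neighbours n E i) = k)"

definition connected_graph :: "nat \<Rightarrow> (nat \<Rightarrow> nat \<Rightarrow> bool) \<Rightarrow> bool" where
  "connected_graph n E \<longleftrightarrow> 0 < n \<and> (\<forall>u<n. \<forall>v<n. \<exists>m. (E ^^ m) u v)"

definition graph_dist :: "(nat \<Rightarrow> nat \<Rightarrow> bool) \<Rightarrow> nat \<Rightarrow> nat \<Rightarrow> nat" where
  "graph_dist E u v = (LEAST m. (E ^^ m) u v)"

definition diameter :: "nat \<Rightarrow> (nat \<Rightarrow> nat \<Rightarrow> bool) \<Rightarrow> nat" where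
  "diameter n E = Max {graph_dist E u v | u v. u < n \<and> v < n}"

definition adj_matrix :: "nat \<Rightarrow> (nat \<Rightarrow> nat \<Rightarrow> bool) \<Rightarrow> real mat" where
  "adj_matrix n E = mat n n (\<lambda>(i, j). if E i j then 1 else 0)"

end

theory Submission
  imports Defs "HOL-Analysis.Function_Topology"
begin

text \<open>Choose vertices u, v at distance at least 3. The vector e_u - e_v is orthogonal to
  the all-ones vector and, since u and v have no common neighbour, its image under the
  adjacency operator A has squared norm 2k = k |e_u - e_v|^2. Hence the
  maximum \<mu> of the Rayleigh quotient of A^2 on the orthogonal complement of the all-ones
  vector is at least k. A maximizer is an eigenvector of A^2 for \<mu>, which yields an
  eigenvector of A orthogonal to the all-ones vector with eigenvalue \<theta> = \<plusminus>sqrt \<mu>. By the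
  maximum principle every eigenvector for k of a connected k-regular graph is constant, so
  \<theta> \<noteq> k, while \<bar>\<theta>\<bar> \<ge> sqrt k > sqrt (k/2).\<close>

definition adj_apply :: "nat \<Rightarrow> (nat \<Rightarrow> nat \<Rightarrow> bool) \<Rightarrow> (nat \<Rightarrow> real) \<Rightarrow> nat \<Rightarrow> real" where
  "adj_apply n E f i = (\<Sum>j<n. if E i j then f j else 0)"

definition dot :: "nat \<Rightarrow> (nat \<Rightarrow> real) \<Rightarrow> (nat \<Rightarrow> real) \<Rightarrow> real" where
  "dot n f g = (\<Sum>i<n. f i * g i)"

definition sum_zero_vecs :: "nat \<Rightarrow> (nat \<Rightarrow> real) set" where
  "sum_zero_vecs n = {g. (\<forall>i\<ge>n. g i = 0) \<and> (\<Sum>i<n. g i) = 0}"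

lemma simple_graph_sym: "simple_graph n E \<Longrightarrow> E i j \<longleftrightarrow> E j i"
  unfolding simple_graph_def by blast

lemma simple_graph_edge_bounds: "simple_graph n E \<Longrightarrow> E i j \<Longrightarrow> i < n \<and> j < n"
  unfolding simple_graph_def by blast

lemma regular_graph_card_in_neighbours:
  assumes "simple_graph n E" "regular_graph n E k" "j < n"
  shows "card {i\<in>{..<n}. E i j} = k"
proof -
  have "{i\<in>{..<n}. E i j} = neighbours n E j"
    unfolding neighbours_def using simple_graph_sym[OF assms(1)] by auto
  then show ?thesis using assms(2,3) unfolding regular_graph_def by simp
qed

lemma diameter_ge_3_far_pair:
  assumes "connected_graph n E" "diameter n E \<ge> 3"
  obtains u v where "u < n" "v < n" "u \<noteq> v" "\<And>w. \<not> (E u w \<and> E w v)"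
proof -
  let ?D = "{graph_dist E u v | u v. u < n \<and> v < n}"
  have "?D = (\<lambda>(u, v). graph_dist E u v) ` ({..<n} \<times> {..<n})" by auto
  then have "finite ?D" by simp
  moreover have "?D \<noteq> {}" using assms(1) unfolding connected_graph_def by auto
  ultimately have "Max ?D \<in> ?D" by (rule Max_in)
  then obtain u v where uv: "u < n" "v < n" "graph_dist E u v = diameter n E"
    unfolding diameter_def by auto
  have no_walk: "\<not> (E ^^ l) u v" if "l < 3" for l
  proof
    assume "(E ^^ l) u v"
    then have "graph_dist E u v \<le> l" unfolding graph_dist_def by (rule Least_le)
    with uv(3) assms(2) that show False by simp
  qed
  have "u \<noteq> v" using no_walk[of 0] by auto
  moreover have "\<not> (E u w \<and> E w v)" for w
    using no_walk[of 2] by (auto simp: numeral_2_eq_2)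
  ultimately show ?thesis using that uv by blast
qed

lemma adj_apply_outside: "simple_graph n E \<Longrightarrow> n \<le> i \<Longrightarrow> adj_apply n E f i = 0"
  unfolding adj_apply_def using simple_graph_edge_bounds by (fastforce intro: sum.neutral)

lemma adj_apply_add_scale:
  "adj_apply n E (\<lambda>i. f i + t * g i) = (\<lambda>i. adj_apply n E f i + t * adj_apply n E g i)"
  unfolding adj_apply_def sum_distrib_left sum.distrib[symmetric] by (intro ext sum.cong) auto

lemma adj_apply_divide: "adj_apply n E (\<lambda>i. f i / s) = (\<lambda>i. adj_apply n E f i / s)"
  unfolding adj_apply_def sum_divide_distrib by (intro ext sum.cong) auto

lemma dot_adj_apply_sym:
  assumes "simple_graph n E"
  shows "dot n (adj_apply n E f) g = dot n f (adj_apply n E g)"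
proof -
  have "dot n (adj_apply n E f) g = (\<Sum>i<n. \<Sum>j<n. if E i j then f j * g i else 0)"
    unfolding dot_def adj_apply_def by (auto simp: sum_distrib_right intro!: sum.cong)
  also have "\<dots> = (\<Sum>j<n. \<Sum>i<n. if E i j then f j * g i else 0)"
    by (rule sum.swap)
  also have "\<dots> = dot n f (adj_apply n E g)"
    unfolding dot_def adj_apply_def using simple_graph_sym[OF assms]
    by (auto simp: sum_distrib_left intro!: sum.cong)
  finally show ?thesis .
qed

lemma sum_adj_apply:
  assumes "simple_graph n E" "regular_graph n E k"
  shows "(\<Sum>i<n. adj_apply n E f i) = real k * (\<Sum>i<n. f i)"
proof -
  have "(\<Sum>i<n. adj_apply n E f i) = (\<Sum>j<n. \<Sum>i<n. if E i j then f j else 0)"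
    unfolding adj_apply_def by (rule sum.swap)
  also have "\<dots> = (\<Sum>j<n. real (card {i\<in>{..<n}. E i j}) * f j)"
    by (simp add: sum.inter_filter[symmetric])
  also have "\<dots> = (\<Sum>j<n. real k * f j)"
    using regular_graph_card_in_neighbours[OF assms] by simp
  finally show ?thesis by (simp add: sum_distrib_left)
qed

lemma adj_apply_sum_zero_vecs:
  assumes "simple_graph n E" "regular_graph n E k" "g \<in> sum_zero_vecs n"
  shows "adj_apply n E g \<in> sum_zero_vecs n"
  using assms adj_apply_outside[OF assms(1)] sum_adj_apply[OF assms(1,2)]
  unfolding sum_zero_vecs_def by simp

lemma sum_zero_vecs_add_scale:
  "g \<in> sum_zero_vecs n \<Longrightarrow> h \<in> sum_zero_vecs n \<Longrightarrow> (\<lambda>i. g i + t * h i) \<in> sum_zero_vecs n"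
  unfolding sum_zero_vecs_def by (simp add: sum.distrib sum_distrib_left[symmetric])

lemma eigenvalue_adj_matrixI:
  assumes "\<forall>j<n. adj_apply n E x j = \<theta> * x j" "i < n" "x i \<noteq> 0"
  shows "eigenvalue (adj_matrix n E) \<theta>"
  unfolding eigenvalue_def eigenvector_def
proof (intro exI conjI)
  show "vec n x \<in> carrier_vec (dim_row (adj_matrix n E))" by (simp add: adj_matrix_def)
  show "vec n x \<noteq> 0\<^sub>v (dim_row (adj_matrix n E))"
    using assms(2,3) by (auto simp: adj_matrix_def dest!: arg_cong[where f = "\<lambda>v. v $ i"])
  show "adj_matrix n E *\<^sub>v vec n x = \<theta> \<cdot>\<^sub>v vec n x"
  proof (rule eq_vecI)
    fix j assume "j < dim_vec (\<theta> \<cdot>\<^sub>v vec n x)"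
    then have j: "j < n" by simp
    have "(adj_matrix n E *\<^sub>v vec n x) $ j = adj_apply n E x j"
      using j unfolding adj_apply_def
      by (auto simp: adj_matrix_def scalar_prod_def lessThan_atLeast0 intro: sum.cong)
    then show "(adj_matrix n E *\<^sub>v vec n x) $ j = (\<theta> \<cdot>\<^sub>v vec n x) $ j"
      using assms(1) j by simp
  qed (simp add: adj_matrix_def)
qed

text \<open>Maximum principle: at a vertex where x is maximal, x i = (1/k) \<Sum> x j over the k
  neighbours forces x to be maximal at every neighbour as well.\<close>

lemma adj_eigenvector_degree_constant:
  assumes sg: "simple_graph n E" and cn: "connected_graph n E" and rg: "regular_graph n E k"
    and ev: "\<forall>i<n. adj_apply n E x i = real k * x i"
  obtains c where "\<forall>i<n. x i = c"
proof -
  have fin: "finite (x ` {..<n})" and ne: "x ` {..<n} \<noteq> {}"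
    using cn unfolding connected_graph_def by auto
  define m where "m = Max (x ` {..<n})"
  obtain i0 where i0: "i0 < n" "x i0 = m"
    using Max_in[OF fin ne] unfolding m_def by auto
  have le: "x j \<le> m" if "j < n" for j
    unfolding m_def using that by (auto intro: Max_ge[OF fin])
  have step: "x j = m" if i: "i < n" "x i = m" and e: "E i j" for i j
  proof (rule ccontr)
    assume "x j \<noteq> m"
    then have lt: "x j < m" using le simple_graph_edge_bounds[OF sg e] by fastforce
    have "adj_apply n E x i = (\<Sum>l\<in>neighbours n E i. x l)"
      unfolding adj_apply_def neighbours_def by (simp add: sum.inter_filter[symmetric])
    also have "\<dots> < (\<Sum>l\<in>neighbours n E i. m)"
      using le lt e simple_graph_edge_bounds[OF sg e]
      by (intro sum_strict_mono_ex1) (auto simp: neighbours_def)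
    also have "\<dots> = real k * m" using rg i unfolding regular_graph_def by simp
    finally show False using ev i by simp
  qed
  have walk: "v < n \<and> x v = m" if "(E ^^ l) i0 v" for l v
    using that
  proof (induction l arbitrary: v)
    case 0
    then show ?case using i0 by simp
  next
    case (Suc l)
    then obtain w where "(E ^^ l) i0 w" "E w v" by auto
    with Suc.IH step simple_graph_edge_bounds[OF sg] show ?case by blast
  qed
  have "x v = m" if "v < n" for v
    using cn i0(1) that walk unfolding connected_graph_def by blast
  then show ?thesis using that by blast
qed

lemma sum_zero_adj_eigenvalue_ne_degree:
  assumes "simple_graph n E" "connected_graph n E" "regular_graph n E k"
    and "x \<in> sum_zero_vecs n" "\<forall>j<n. adj_apply n E x j = \<theta> * x j" "i < n" "x i \<noteq> 0"
  shows "\<theta> \<noteq> real k"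
proof
  assume "\<theta> = real k"
  then obtain c where c: "\<forall>j<n. x j = c"
    using adj_eigenvector_degree_constant[OF assms(1-3)] assms(5) by metis
  have "real n * c = 0"
    using assms(4) c unfolding sum_zero_vecs_def by simp
  with assms(6,7) c show False by simp
qed

subsection \<open>Rayleigh quotients\<close>

lemma dot_self_nonneg: "dot n f f \<ge> 0"
  unfolding dot_def by (auto intro: sum_nonneg)

lemma dot_self_eq_0D: "dot n f f = 0 \<Longrightarrow> i < n \<Longrightarrow> f i = 0"
  unfolding dot_def by (subst (asm) sum_nonneg_eq_0_iff) auto

lemma square_le_dot_self: "i < n \<Longrightarrow> (f i)\<^sup>2 \<le> dot n f f"
  unfolding dot_def power2_eq_square by (rule member_le_sum) auto

lemma dot_divide_self: "dot n (\<lambda>i. f i / s) (\<lambda>i. f i / s) = dot n f f / s\<^sup>2"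
  unfolding dot_def by (simp add: sum_divide_distrib power2_eq_square)

lemma continuous_on_dot_self: "continuous_on UNIV (\<lambda>f::nat \<Rightarrow> real. dot n f f)"
  unfolding dot_def by (intro continuous_intros continuous_on_product_coordinates)

lemma compact_PiE_cube: "compact (PiE UNIV (\<lambda>i. if i < n then {-1..1::real} else {0}))"
proof -
  have "compactin (product_topology (\<lambda>_. euclidean) UNIV)
      (PiE UNIV (\<lambda>i. if i < n then {-1..1::real} else {0}))"
    unfolding compactin_PiE by auto
  then show ?thesis by (simp add: euclidean_product_topology)
qed

lemma rayleigh_max_exists:
  fixes Q :: "(nat \<Rightarrow> real) \<Rightarrow> real"
  assumes Q_cont: "continuous_on UNIV Q"
    and Q_hom: "\<And>g s. s > 0 \<Longrightarrow> Q (\<lambda>i. g i / s) = Q g / s\<^sup>2"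
    and W_closed: "closed W" and W_supp: "\<And>g i. g \<in> W \<Longrightarrow> n \<le> i \<Longrightarrow> g i = 0"
    and W_cone: "\<And>g s. g \<in> W \<Longrightarrow> s > 0 \<Longrightarrow> (\<lambda>i. g i / s) \<in> W"
    and "d \<in> W" "dot n d d \<noteq> 0"
  obtains f where "f \<in> W" "dot n f f = 1" "\<And>g. g \<in> W \<Longrightarrow> Q g \<le> Q f * dot n g g"
proof -
  define C where "C = PiE UNIV (\<lambda>i. if i < n then {-1..1::real} else {0})"
  define S where "S = C \<inter> W \<inter> {f. dot n f f = 1}"
  have normalize: "(\<lambda>i. g i / sqrt (dot n g g)) \<in> S" if g: "g \<in> W" "dot n g g \<noteq> 0" for g
  proof -
    let ?h = "\<lambda>i. g i / sqrt (dot n g g)"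
    have pos: "dot n g g > 0" using g(2) dot_self_nonneg[of n g] by linarith
    then have h1: "dot n ?h ?h = 1" by (simp add: dot_divide_self)
    have "?h i \<in> {-1..1}" if "i < n" for i
      using square_le_dot_self[OF that, of ?h] h1 abs_le_iff[of "?h i" 1]
      by (simp only: abs_square_le_1) auto
    then have "?h \<in> C" using W_supp[OF g(1)] unfolding C_def by (auto simp: PiE_iff)
    then show ?thesis using W_cone[OF g(1)] pos h1 unfolding S_def by simp
  qed
  have "compact S"
    unfolding S_def C_def
    by (intro closed_Int_compact compact_Int_closed compact_PiE_cube W_closed
        closed_Collect_eq continuous_on_dot_self continuous_on_const)
  moreover have "S \<noteq> {}" using normalize assms(6,7) by blast
  ultimately obtain f where f: "f \<in> S" and f_max: "\<And>g. g \<in> S \<Longrightarrow> Q g \<le> Q f"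
    using continuous_attains_sup continuous_on_subset[OF Q_cont subset_UNIV] by metis
  have "Q g \<le> Q f * dot n g g" if g: "g \<in> W" for g
  proof (cases "dot n g g = 0")
    case True
    then have "g = (\<lambda>_. 0)"
      using dot_self_eq_0D W_supp[OF g] by (metis not_less)
    moreover have "Q (\<lambda>_. 0) = 0" using Q_hom[of 2 "\<lambda>_. 0"] by simp
    ultimately show ?thesis using True by simp
  next
    case False
    then have "dot n g g > 0" using dot_self_nonneg[of n g] by linarith
    moreover have "Q g / dot n g g \<le> Q f"
      using f_max[OF normalize[OF g False]] Q_hom[of "sqrt (dot n g g)" g] \<open>dot n g g > 0\<close> by simp
    ultimately show ?thesis by (simp add: field_simps)
  qed
  then show ?thesis using that f unfolding S_def by blast
qed

lemma nonneg_quadratic_linear_coeff_eq_0: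
  fixes a b :: real
  assumes "\<And>t. 0 \<le> a * t + b * t\<^sup>2"
  shows "a = 0"
proof (rule ccontr)
  assume "a \<noteq> 0"
  define s where "s = \<bar>b\<bar> + 1"
  have s: "s > 0" "b - s < 0" unfolding s_def by auto
  have "a * (- a / s) + b * (- a / s)\<^sup>2 = a\<^sup>2 / s\<^sup>2 * (b - s)"
    using s by (simp add: field_simps power2_eq_square)
  also have "\<dots> < 0" using \<open>a \<noteq> 0\<close> s by (intro mult_pos_neg) auto
  finally show False using assms[of "- a / s"] by simp
qed

text \<open>First variation: perturbing a maximizer f in the direction of its residual
  h = \<mu> f - B f changes \<mu> |g|^2 - <g, B g> by 2 t |h|^2 + O(t^2), which must be \<ge> 0.\<close>

lemma rayleigh_maximizer_eigenvector:
  fixes B :: "(nat \<Rightarrow> real) \<Rightarrow> nat \<Rightarrow> real"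
  assumes lin: "\<And>f g t i. B (\<lambda>i. f i + t * g i) i = B f i + t * B g i"
    and sym: "\<And>f g. dot n (B f) g = dot n f (B g)"
    and W_add_scale: "\<And>g h t. g \<in> W \<Longrightarrow> h \<in> W \<Longrightarrow> (\<lambda>i. g i + t * h i) \<in> W"
    and max: "\<And>g. g \<in> W \<Longrightarrow> dot n g (B g) \<le> \<mu> * dot n g g"
    and "f \<in> W" and residual: "(\<lambda>i. \<mu> * f i - B f i) \<in> W"
    and attained: "dot n f (B f) = \<mu> * dot n f f"
  shows "\<forall>i<n. B f i = \<mu> * f i"
proof -
  define h where "h i = \<mu> * f i - B f i" for i
  have h: "dot n h h = \<mu> * dot n f h - dot n (B f) h"
    unfolding h_def dot_def by (simp add: sum_subtractf sum_distrib_left sum.distrib algebra_simps)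
  have "0 \<le> 2 * dot n h h * t + (\<mu> * dot n h h - dot n h (B h)) * t\<^sup>2" for t
  proof -
    let ?g = "\<lambda>i. f i + t * h i"
    have le: "dot n ?g (B ?g) \<le> \<mu> * dot n ?g ?g"
      using max W_add_scale \<open>f \<in> W\<close> residual unfolding h_def by blast
    have gg: "dot n ?g ?g = dot n f f + 2 * t * dot n f h + t\<^sup>2 * dot n h h"
      unfolding dot_def
      by (simp add: algebra_simps power2_eq_square sum.distrib sum_distrib_left)
    have "dot n ?g (B ?g) =
        dot n f (B f) + t * (dot n f (B h) + dot n h (B f)) + t\<^sup>2 * dot n h (B h)"
      unfolding dot_def lin
      by (simp add: algebra_simps power2_eq_square sum.distrib sum_distrib_left)
    moreover have "dot n h (B f) = dot n (B f) h" "dot n f (B h) = dot n (B f) h"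
      using sym[of f h] unfolding dot_def by (simp_all add: mult.commute)
    ultimately have gBg: "dot n ?g (B ?g) =
        \<mu> * dot n f f + 2 * t * dot n (B f) h + t\<^sup>2 * dot n h (B h)"
      using attained by simp
    have "2 * dot n h h * t + (\<mu> * dot n h h - dot n h (B h)) * t\<^sup>2 =
        \<mu> * dot n ?g ?g - dot n ?g (B ?g)"
      unfolding gg gBg by (simp add: h algebra_simps)
    then show ?thesis using le by simp
  qed
  then have "2 * dot n h h = 0"
    by (rule nonneg_quadratic_linear_coeff_eq_0)
  then have "h i = 0" if "i < n" for i
    using dot_self_eq_0D that by simp
  then show ?thesis unfolding h_def by simp
qed

subsection \<open>An eigenvector orthogonal to the all-ones vector\<close>

lemma closed_sum_zero_vecs: "closed (sum_zero_vecs n)"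
proof -
  have "sum_zero_vecs n = (\<Inter>i\<in>{n..}. {g. g i = 0}) \<inter> {g. (\<Sum>i<n. g i) = 0}"
    unfolding sum_zero_vecs_def by auto
  then show ?thesis
    by (simp only:) (intro closed_Int closed_INT ballI closed_Collect_eq continuous_intros
        continuous_on_product_coordinates)
qed

lemma continuous_on_dot_adj_apply_adj_apply:
  "continuous_on UNIV (\<lambda>g. dot n g (adj_apply n E (adj_apply n E g)))"
proof -
  have "adj_apply n E g = (\<lambda>i. \<Sum>j<n. of_bool (E i j) * g j)" for g
    unfolding adj_apply_def by (intro ext sum.cong) auto
  then show ?thesis
    unfolding dot_def by (simp only:) (intro continuous_intros continuous_on_product_coordinates)
qed

lemma far_pair_test_vector:
  assumes sg: "simple_graph n E" and rg: "regular_graph n E k"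
    and uv: "u < n" "v < n" "u \<noteq> v" "\<And>w. \<not> (E u w \<and> E w v)"
    and d_def: "d = (\<lambda>i. if i = u then 1 else if i = v then -1 else 0)"
  shows "d \<in> sum_zero_vecs n" "dot n d d = 2"
    and "dot n (adj_apply n E d) (adj_apply n E d) = 2 * real k"
proof -
  have "(\<Sum>i<n. d i) = (\<Sum>i<n. of_bool (i = u) - of_bool (i = v))"
    unfolding d_def using uv(3) by (auto intro: sum.cong)
  then show "d \<in> sum_zero_vecs n"
    using uv(1-3) unfolding sum_zero_vecs_def d_def by (simp add: sum_subtractf)
  have "dot n d d = (\<Sum>i<n. of_bool (i = u) + of_bool (i = v))"
    unfolding dot_def d_def using uv(3) by (auto intro: sum.cong)
  then show "dot n d d = 2" using uv(1,2) by (simp add: sum.distrib)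
  have adj_d: "adj_apply n E d i = of_bool (E i u) - of_bool (E i v)" for i
  proof -
    have "adj_apply n E d i =
        (\<Sum>j<n. of_bool (j = u \<and> E i u) - of_bool (j = v \<and> E i v))"
      unfolding adj_apply_def d_def using uv(3) by (auto intro: sum.cong)
    then show ?thesis using uv(1,2) by (simp add: sum_subtractf)
  qed
  have "\<not> (E i u \<and> E i v)" for i
    using uv(4)[of i] simple_graph_sym[OF sg] by blast
  then have "dot n (adj_apply n E d) (adj_apply n E d) =
      (\<Sum>i<n. of_bool (E i u) + of_bool (E i v))"
    unfolding dot_def adj_d by (intro sum.cong) auto
  also have "\<dots> = real (card {i\<in>{..<n}. E i u}) + real (card {i\<in>{..<n}. E i v})"
    by (simp add: sum.distrib sum.inter_filter[symmetric] Int_def)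
  finally show "dot n (adj_apply n E d) (adj_apply n E d) = 2 * real k"
    using regular_graph_card_in_neighbours[OF sg rg] uv(1,2) by simp
qed

lemma adj_sq_eigenvector_sum_zero:
  assumes sg: "simple_graph n E" and rg: "regular_graph n E k"
    and far: "u < n" "v < n" "u \<noteq> v" "\<And>w. \<not> (E u w \<and> E w v)"
  obtains f \<mu> i where "f \<in> sum_zero_vecs n" "i < n" "f i \<noteq> 0"
    and "\<forall>j<n. adj_apply n E (adj_apply n E f) j = \<mu> * f j" "real k \<le> \<mu>"
proof -
  let ?W = "sum_zero_vecs n"
  let ?B = "\<lambda>g. adj_apply n E (adj_apply n E g)"
  define d where "d = (\<lambda>i. if i = u then 1 else if i = v then -1 else 0::real)"
  note d = far_pair_test_vector[OF sg rg far d_def]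
  have B_sym: "dot n (?B f) g = dot n f (?B g)" for f g
    using dot_adj_apply_sym[OF sg] by metis
  have B_W: "?B g \<in> ?W" if "g \<in> ?W" for g
    using adj_apply_sum_zero_vecs[OF sg rg] that by blast
  obtain f where f: "f \<in> ?W" "dot n f f = 1"
    and max: "\<And>g. g \<in> ?W \<Longrightarrow> dot n g (?B g) \<le> dot n f (?B f) * dot n g g"
  proof (rule rayleigh_max_exists[of "\<lambda>g. dot n g (?B g)" ?W n d])
    show "dot n (\<lambda>i. g i / s) (?B (\<lambda>i. g i / s)) = dot n g (?B g) / s\<^sup>2" for g s
      unfolding dot_def adj_apply_divide by (simp add: sum_divide_distrib power2_eq_square)
    show "(\<lambda>i. g i / s) \<in> ?W" if "g \<in> ?W" for g and s :: real
      using that unfolding sum_zero_vecs_def by (simp add: sum_divide_distrib[symmetric])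
  qed (use d that continuous_on_dot_adj_apply_adj_apply closed_sum_zero_vecs in
      \<open>auto simp: sum_zero_vecs_def\<close>)
  define \<mu> where "\<mu> = dot n f (?B f)"
  have "dot n d (?B d) = 2 * real k"
    using d(3) dot_adj_apply_sym[OF sg] by metis
  then have "real k \<le> \<mu>"
    using max[OF d(1)] d(2) unfolding \<mu>_def by simp
  moreover have "\<forall>j<n. ?B f j = \<mu> * f j"
  proof (rule rayleigh_maximizer_eigenvector[of ?B n ?W])
    show "(\<lambda>i. \<mu> * f i - ?B f i) \<in> ?W"
      using f(1) B_W[OF f(1)] unfolding sum_zero_vecs_def
      by (simp add: sum_subtractf sum_distrib_left[symmetric])
  qed (use f max B_sym sum_zero_vecs_add_scale in \<open>simp_all add: \<mu>_def adj_apply_add_scale\<close>)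
  moreover obtain i where "i < n" "f i \<noteq> 0"
    using f(2) unfolding dot_def
    by (metis (mono_tags) lessThan_iff mult_zero_left sum.neutral zero_neq_one)
  ultimately show ?thesis using that f(1) by blast
qed

lemma adj_eigenvector_of_adj_sq:
  assumes sg: "simple_graph n E" and rg: "regular_graph n E k"
    and f: "f \<in> sum_zero_vecs n" "i < n" "f i \<noteq> 0"
    and sq: "\<forall>j<n. adj_apply n E (adj_apply n E f) j = r\<^sup>2 * f j"
  obtains x \<theta> j where "\<bar>\<theta>\<bar> = \<bar>r\<bar>" "x \<in> sum_zero_vecs n" "j < n" "x j \<noteq> 0"
    and "\<forall>l<n. adj_apply n E x l = \<theta> * x l"
proof (cases "\<exists>j<n. adj_apply n E f j + r * f j \<noteq> 0")
  case True
  then obtain j where j: "j < n" "adj_apply n E f j + r * f j \<noteq> 0" by blast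
  let ?x = "\<lambda>l. adj_apply n E f l + r * f l"
  have "adj_apply n E ?x l = r * ?x l" if "l < n" for l
    using sq that unfolding adj_apply_add_scale by (simp add: algebra_simps power2_eq_square)
  moreover have "?x \<in> sum_zero_vecs n"
    by (intro sum_zero_vecs_add_scale adj_apply_sum_zero_vecs[OF sg rg] f(1))
  ultimately show ?thesis using that[of r ?x j] j by blast
next
  case False
  then have "\<forall>l<n. adj_apply n E f l = - r * f l" by (auto simp: algebra_simps)
  then show ?thesis using that[of "- r" f i] f by simp
qed

theorem lemma3p1:
  fixes n k :: nat and E :: "nat \<Rightarrow> nat \<Rightarrow> bool"
  assumes "simple_graph n E"
    and "connected_graph n E"
    and "regular_graph n E k"
    and "k \<ge> 2"
    and "diameter n E \<ge> 3"
  shows "\<exists>\<theta>. eigenvalue (adj_matrix n E) \<theta> \<and> \<theta> \<noteq> real k \<and> \<bar>\<theta>\<bar> > sqrt (real k / 2)"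
proof -
  obtain u v where far: "u < n" "v < n" "u \<noteq> v" "\<And>w. \<not> (E u w \<and> E w v)"
    by (rule diameter_ge_3_far_pair[OF assms(2,5)]) blast
  obtain f \<mu> i where f: "f \<in> sum_zero_vecs n" "i < n" "f i \<noteq> 0"
    and sq: "\<forall>j<n. adj_apply n E (adj_apply n E f) j = \<mu> * f j" and k_le: "real k \<le> \<mu>"
    by (rule adj_sq_eigenvector_sum_zero[OF assms(1,3) far])
  have sq_root: "\<forall>j<n. adj_apply n E (adj_apply n E f) j = (sqrt \<mu>)\<^sup>2 * f j"
    using sq k_le by simp
  obtain x \<theta> j where \<theta>: "\<bar>\<theta>\<bar> = \<bar>sqrt \<mu>\<bar>" and x: "x \<in> sum_zero_vecs n" "j < n" "x j \<noteq> 0"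
    and ev: "\<forall>l<n. adj_apply n E x l = \<theta> * x l"
    by (rule adj_eigenvector_of_adj_sq[OF assms(1,3) f sq_root])
  have "sqrt (real k / 2) < sqrt (real k)" using assms(4) by simp
  also have "\<dots> \<le> \<bar>\<theta>\<bar>" using \<theta> k_le by simp
  finally show ?thesis
    using eigenvalue_adj_matrixI[OF ev x(2,3)]
      sum_zero_adj_eigenvalue_ne_degree[OF assms(1-3) x(1) ev x(2,3)] by blast
qed

end
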